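(* Let $k$ be a finite field and $r\ge2$. (a) The class $\mathfrak{N}_5$ of Lie algebras over $k$ satisfying the axioms $\Phi1$–$\Phi5$ coincides with the class of all $U$-algebras $B$ with $\dim_k B/\mathrm{Fit}(B)\le r$. (b) The class $\mathfrak{N}'_5$ of $F_r$-Lie algebras satisfying $\Phi1$–$\Phi4$ and $\Phi'5$ coincides with the class of all $F_r$-Lie algebras $B$ that are $U$-algebras with $\dim_k B/\mathrm{Fit}(B)=r$.
   Context: Products are left-normed. $\mathrm{Fit}(B)$ is the sum of all nilpotent ideals of $B$. A metabelian Lie algebra $B$ (one satisfying $(x_1x_2)(x_3x_4)=0$) is a $U$-algebra if $\mathrm{Fit}(B)$ is abelian and, with $n=\dim B/\mathrm{Fit}(B)$ finite, $\mathrm{Fit}(B)$ is a torsion-free module over $k[x_1,\dots,x_n]$, where the abelian algebra $B/\mathrm{Fit}(B)$ (with basis $\bar b_1,\dots,\bar b_n$) acts on $\mathrm{Fit}(B)$ by $u\cdot x_i=ub_i$. $F_r$ is the free metabelian Lie algebra of rank $r$ with free base $a_1,\dots,a_r$; an $F_r$-Lie algebra contains a designated copy of $F_r$. For a term $y$ and $f\in k[x_1,\dots,x_n]$, $y\cdot f(t_1,\dots,t_n)$ is the Lie term where monomial $x_{i_1}\cdots x_{i_t}$ acts by $y\mapsto yt_{i_1}\cdots t_{i_t}$, extended linearly. Let $\mathrm{Fit}(x)\equiv\forall y\,(xyx=0)$ and $\varphi(x_1,\dots,x_n)\equiv\bigwedge_{(\alpha_i)\in k^n\setminus\{0\}}\neg\mathrm{Fit}(\sum\alpha_ix_i)$.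 Axioms: $\Phi1$: $\forall x_1..x_4\,(x_1x_2)(x_3x_4)=0$. $\Phi2$: $\forall x,y\,(xyx=0\wedge xyy=0\to xy=0)$. $\Phi3$: $\forall x,y,z\,(x\ne0\wedge xy=0\wedge xz=0\to yz=0)$. $\Phi4$: $\forall x_1..x_{r+1}\,\neg\varphi(x_1..x_{r+1})$. $\Phi5$: for every $n\le r$ and nonzero $f\in k[x_1..x_n]$: $\forall z_1,z_2,x_1..x_n\,((z_1z_2)\cdot f(x_1..x_n)=0\wedge z_1z_2\ne0\to\neg\varphi(x_1..x_n))$. $\Phi'5$: for every nonzero $f\in k[x_1..x_r]$: $\forall z_1,z_2\,((z_1z_2)\cdot f(a_1..a_r)=0\to z_1z_2=0)$. *)

theory Defs
  imports Complex_Main "HOL-Library.Poly_Mapping"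
begin

text \<open>Products are left-normed:
  xyz = (xy)z = br (br x y) z.\<close>

definition lie_algebra :: "('k::field \<Rightarrow> 'b::ab_group_add \<Rightarrow> 'b) \<Rightarrow> ('b \<Rightarrow> 'b \<Rightarrow> 'b) \<Rightarrow> bool" where
  "lie_algebra sc br \<longleftrightarrow> vector_space sc
     \<and> (\<forall>x y z. br (x + y) z = br x z + br y z)
     \<and> (\<forall>x y z. br x (y + z) = br x y + br x z)
     \<and> (\<forall>c x y. br (sc c x) y = sc c (br x y))
     \<and> (\<forall>c x y. br x (sc c y) = sc c (br x y))
     \<and> (\<forall>x. br x x = 0)
     \<and> (\<forall>x y z. br x (br y z) + br y (br z x) + br z (br x y) = 0)"

definition metabelian :: "('b::ab_group_add \<Rightarrow> 'b \<Rightarrow> 'b) \<Rightarrow> bool" where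
  "metabelian br \<longleftrightarrow> (\<forall>x1 x2 x3 x4. br (br x1 x2) (br x3 x4) = 0)"

definition lie_ideal :: "('k::field \<Rightarrow> 'b::ab_group_add \<Rightarrow> 'b) \<Rightarrow> ('b \<Rightarrow> 'b \<Rightarrow> 'b) \<Rightarrow> 'b set \<Rightarrow> bool" where
  "lie_ideal sc br I \<longleftrightarrow> module.subspace sc I \<and> (\<forall>x\<in>I. \<forall>y. br x y \<in> I \<and> br y x \<in> I)"

text \<open>Lower central series of a subalgebra I (viewed as a Lie algebra):
  I^1 = I, I^(m+1) = [I^m, I].  Here lcs .. 0 = I.\<close>
fun lcs :: "('k::field \<Rightarrow> 'b::ab_group_add \<Rightarrow> 'b) \<Rightarrow> ('b \<Rightarrow> 'b \<Rightarrow> 'b) \<Rightarrow> 'b set \<Rightarrow> nat \<Rightarrow> 'b set" where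
  "lcs sc br I 0 = I"
| "lcs sc br I (Suc m) = module.span sc {br x y | x y. x \<in> lcs sc br I m \<and> y \<in> I}"

definition nilpotent_ideal :: "('k::field \<Rightarrow> 'b::ab_group_add \<Rightarrow> 'b) \<Rightarrow> ('b \<Rightarrow> 'b \<Rightarrow> 'b) \<Rightarrow> 'b set \<Rightarrow> bool" where
  "nilpotent_ideal sc br I \<longleftrightarrow> lie_ideal sc br I \<and> (\<exists>m. lcs sc br I m \<subseteq> {0})"

definition Fit :: "('k::field \<Rightarrow> 'b::ab_group_add \<Rightarrow> 'b) \<Rightarrow> ('b \<Rightarrow> 'b \<Rightarrow> 'b) \<Rightarrow> 'b set" where
  "Fit sc br = module.span sc (\<Union>{I. nilpotent_ideal sc br I})"

definition quot_basis :: "('k::field \<Rightarrow> 'b::ab_group_add \<Rightarrow> 'b) \<Rightarrow> 'b set \<Rightarrow> (nat \<Rightarrow> 'b) \<Rightarrow> nat \<Rightarrow> bool" where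
  "quot_basis sc S b n \<longleftrightarrow>
     (\<forall>c. (\<Sum>i<n. sc (c i) (b i)) \<in> S \<longrightarrow> (\<forall>i<n. c i = 0))
     \<and> module.span sc (S \<union> b ` {..<n}) = UNIV"

definition quot_dim :: "('k::field \<Rightarrow> 'b::ab_group_add \<Rightarrow> 'b) \<Rightarrow> 'b set \<Rightarrow> nat \<Rightarrow> bool" where
  "quot_dim sc S n \<longleftrightarrow> (\<exists>b. quot_basis sc S b n)"

text \<open>Multivariate polynomials over 'k: finitely supported maps from monomials
  (finitely supported exponent vectors) to coefficients.  Variable x_(i+1) of the paper is index i.\<close>

definition poly_in_vars :: "nat \<Rightarrow> ((nat \<Rightarrow>\<^sub>0 nat) \<Rightarrow>\<^sub>0 'k::zero) \<Rightarrow> bool" where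
  "poly_in_vars n f \<longleftrightarrow> (\<forall>m\<in>Poly_Mapping.keys f. Poly_Mapping.keys m \<subseteq> {..<n})"

text \<open>y . m(t): the monomial x_i1...x_is acts by y \<mapsto> y t_i1 ... t_is (left-normed),
  the variables taken in increasing order of index.\<close>
definition mon_act :: "('b \<Rightarrow> 'b \<Rightarrow> 'b) \<Rightarrow> 'b \<Rightarrow> (nat \<Rightarrow>\<^sub>0 nat) \<Rightarrow> (nat \<Rightarrow> 'b) \<Rightarrow> 'b" where
  "mon_act br y m t =
     foldl (\<lambda>z i. ((\<lambda>w. br w (t i)) ^^ Poly_Mapping.lookup m i) z) y (sorted_list_of_set (Poly_Mapping.keys m))"

definition poly_act :: "('k::field \<Rightarrow> 'b::ab_group_add \<Rightarrow> 'b) \<Rightarrow> ('b \<Rightarrow> 'b \<Rightarrow> 'b) \<Rightarrow> 'b \<Rightarrow> ((nat \<Rightarrow>\<^sub>0 nat) \<Rightarrow>\<^sub>0 'k) \<Rightarrow> (nat \<Rightarrow> 'b) \<Rightarrow> 'b" where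
  "poly_act sc br y f t = (\<Sum>m\<in>Poly_Mapping.keys f. sc (Poly_Mapping.lookup f m) (mon_act br y m t))"

definition abelian_set :: "('b::ab_group_add \<Rightarrow> 'b \<Rightarrow> 'b) \<Rightarrow> 'b set \<Rightarrow> bool" where
  "abelian_set br S \<longleftrightarrow> (\<forall>x\<in>S. \<forall>y\<in>S. br x y = 0)"

definition U_algebra :: "('k::field \<Rightarrow> 'b::ab_group_add \<Rightarrow> 'b) \<Rightarrow> ('b \<Rightarrow> 'b \<Rightarrow> 'b) \<Rightarrow> bool" where
  "U_algebra sc br \<longleftrightarrow> lie_algebra sc br \<and> metabelian br \<and> abelian_set br (Fit sc br)
     \<and> (\<exists>n b. quot_basis sc (Fit sc br) b n
          \<and> (\<forall>f. f \<noteq> 0 \<and> poly_in_vars n f \<longrightarrow>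
                (\<forall>u\<in>Fit sc br. poly_act sc br u f b = 0 \<longrightarrow> u = 0)))"

definition fitf :: "('b::ab_group_add \<Rightarrow> 'b \<Rightarrow> 'b) \<Rightarrow> 'b \<Rightarrow> bool" where
  "fitf br x \<longleftrightarrow> (\<forall>y. br (br x y) x = 0)"

definition phi :: "('k::field \<Rightarrow> 'b::ab_group_add \<Rightarrow> 'b) \<Rightarrow> ('b \<Rightarrow> 'b \<Rightarrow> 'b) \<Rightarrow> nat \<Rightarrow> (nat \<Rightarrow> 'b) \<Rightarrow> bool" where
  "phi sc br n x \<longleftrightarrow>
     (\<forall>\<alpha>::nat \<Rightarrow> 'k. (\<exists>i<n. \<alpha> i \<noteq> 0) \<longrightarrow> \<not> fitf br (\<Sum>i<n. sc (\<alpha> i) (x i)))"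

definition Phi1 :: "('b::ab_group_add \<Rightarrow> 'b \<Rightarrow> 'b) \<Rightarrow> bool" where
  "Phi1 br \<longleftrightarrow> (\<forall>x1 x2 x3 x4. br (br x1 x2) (br x3 x4) = 0)"

definition Phi2 :: "('b::ab_group_add \<Rightarrow> 'b \<Rightarrow> 'b) \<Rightarrow> bool" where
  "Phi2 br \<longleftrightarrow> (\<forall>x y. br (br x y) x = 0 \<and> br (br x y) y = 0 \<longrightarrow> br x y = 0)"

definition Phi3 :: "('b::ab_group_add \<Rightarrow> 'b \<Rightarrow> 'b) \<Rightarrow> bool" where
  "Phi3 br \<longleftrightarrow> (\<forall>x y z. x \<noteq> 0 \<and> br x y = 0 \<and> br x z = 0 \<longrightarrow> br y z = 0)"

definition Phi4 :: "('k::field \<Rightarrow> 'b::ab_group_add \<Rightarrow> 'b) \<Rightarrow> ('b \<Rightarrow> 'b \<Rightarrow> 'b) \<Rightarrow> nat \<Rightarrow> bool" where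
  "Phi4 sc br r \<longleftrightarrow> (\<forall>x. \<not> phi sc br (Suc r) x)"

definition Phi5 :: "('k::field \<Rightarrow> 'b::ab_group_add \<Rightarrow> 'b) \<Rightarrow> ('b \<Rightarrow> 'b \<Rightarrow> 'b) \<Rightarrow> nat \<Rightarrow> bool" where
  "Phi5 sc br r \<longleftrightarrow> (\<forall>n\<le>r. \<forall>f::(nat \<Rightarrow>\<^sub>0 nat) \<Rightarrow>\<^sub>0 'k. f \<noteq> 0 \<and> poly_in_vars n f \<longrightarrow>
      (\<forall>z1 z2 x. poly_act sc br (br z1 z2) f x = 0 \<and> br z1 z2 \<noteq> 0 \<longrightarrow> \<not> phi sc br n x))"

definition Phi5' :: "('k::field \<Rightarrow> 'b::ab_group_add \<Rightarrow> 'b) \<Rightarrow> ('b \<Rightarrow> 'b \<Rightarrow> 'b) \<Rightarrow> nat \<Rightarrow> (nat \<Rightarrow> 'b) \<Rightarrow> bool" where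
  "Phi5' sc br r a \<longleftrightarrow> (\<forall>f::(nat \<Rightarrow>\<^sub>0 nat) \<Rightarrow>\<^sub>0 'k. f \<noteq> 0 \<and> poly_in_vars r f \<longrightarrow>
      (\<forall>z1 z2. poly_act sc br (br z1 z2) f a = 0 \<longrightarrow> br z1 z2 = 0))"

definition gen_subalg :: "('k::field \<Rightarrow> 'b::ab_group_add \<Rightarrow> 'b) \<Rightarrow> ('b \<Rightarrow> 'b \<Rightarrow> 'b) \<Rightarrow> 'b set \<Rightarrow> 'b set" where
  "gen_subalg sc br A = \<Inter>{S. module.subspace sc S \<and> A \<subseteq> S \<and> (\<forall>x\<in>S. \<forall>y\<in>S. br x y \<in> S)}"

definition lie_hom_on :: "('k::field \<Rightarrow> 'b::ab_group_add \<Rightarrow> 'b) \<Rightarrow> ('b \<Rightarrow> 'b \<Rightarrow> 'b)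
    \<Rightarrow> ('k \<Rightarrow> 'c::ab_group_add \<Rightarrow> 'c) \<Rightarrow> ('c \<Rightarrow> 'c \<Rightarrow> 'c) \<Rightarrow> 'b set \<Rightarrow> ('b \<Rightarrow> 'c) \<Rightarrow> bool" where
  "lie_hom_on sc br sc' br' S h \<longleftrightarrow>
     (\<forall>x\<in>S. \<forall>y\<in>S. h (x + y) = h x + h y \<and> h (br x y) = br' (h x) (h y))
     \<and> (\<forall>c. \<forall>x\<in>S. h (sc c x) = sc' c (h x))"

text \<open>Test algebras for the universal property: metabelian Lie algebra structures on the
  countably-infinite-dimensional space k^(N) (finitely supported sequences) with its standard scalar
  multiplication.\<close>
definition std_scale :: "'k::field \<Rightarrow> (nat \<Rightarrow>\<^sub>0 'k) \<Rightarrow> (nat \<Rightarrow>\<^sub>0 'k)" where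
  "std_scale c v = Poly_Mapping.map (\<lambda>x. c * x) v"

text \<open>a 0, ..., a (r-1) freely generate a free metabelian Lie subalgebra (a copy of F_r).\<close>
definition free_metabelian_on :: "('k::field \<Rightarrow> 'b::ab_group_add \<Rightarrow> 'b) \<Rightarrow> ('b \<Rightarrow> 'b \<Rightarrow> 'b)
    \<Rightarrow> nat \<Rightarrow> (nat \<Rightarrow> 'b) \<Rightarrow> bool" where
  "free_metabelian_on sc br r a \<longleftrightarrow>
     (let S = gen_subalg sc br (a ` {..<r}) in
       (\<forall>x1\<in>S. \<forall>x2\<in>S. \<forall>x3\<in>S. \<forall>x4\<in>S. br (br x1 x2) (br x3 x4) = 0)
       \<and> (\<forall>br' :: (nat \<Rightarrow>\<^sub>0 'k) \<Rightarrow> (nat \<Rightarrow>\<^sub>0 'k) \<Rightarrow> (nat \<Rightarrow>\<^sub>0 'k).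
            lie_algebra std_scale br' \<and> metabelian br' \<longrightarrow>
            (\<forall>c. \<exists>h. lie_hom_on sc br std_scale br' S h \<and> (\<forall>i<r. h (a i) = c i))))"

definition Fr_lie_algebra :: "('k::field \<Rightarrow> 'b::ab_group_add \<Rightarrow> 'b) \<Rightarrow> ('b \<Rightarrow> 'b \<Rightarrow> 'b)
    \<Rightarrow> nat \<Rightarrow> (nat \<Rightarrow> 'b) \<Rightarrow> bool" where
  "Fr_lie_algebra sc br r a \<longleftrightarrow> lie_algebra sc br \<and> free_metabelian_on sc br r a"

end

theory Submission
  imports Defs "HOL-Library.FuncSet"
begin

text \<open>Let \<open>Cent\<close> be the centralizer of the derived algebra. In a metabelian algebra it is a
  nilpotent ideal, and both \<open>\<Phi>2\<close> and the \<open>U\<close>-algebra conditions force \<open>Fit(B) = Cent\<close> with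
  \<open>Cent\<close> abelian. Under \<open>\<Phi>2\<close> the formula \<open>Fit(x)\<close> says \<open>x \<in> Cent\<close>, so \<open>\<phi>(x\<^sub>1,\<dots>,x\<^sub>n)\<close>
  says that the \<open>x\<^sub>i\<close> are independent modulo \<open>Cent\<close>, and \<open>\<Phi>4\<close> bounds \<open>dim B/Cent\<close> by \<open>r\<close>.
  Since \<open>Cent\<close> is abelian, \<open>B/Cent\<close> acts on it by commuting operators, making \<open>Cent\<close> a
  \<open>k[x\<^sub>1,\<dots>,x\<^sub>n]\<close>-module. The crux is that torsion-freeness of this module does not depend on the
  basis of \<open>B/Cent\<close> and passes to every family independent modulo \<open>Cent\<close>; over the finite
  field \<open>k\<close> this is seen by counting the elements of spans of monomial images of bounded degree.
  With it, \<open>\<Phi>3\<close> and \<open>\<Phi>5\<close> (or \<open>\<Phi>'5\<close> for the free generators, which are independent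
  modulo \<open>Cent\<close>) amount to torsion-freeness.\<close>

section \<open>The centralizer of the derived algebra\<close>

locale metabelian_lie =
  fixes sc :: "'k::field \<Rightarrow> 'b::ab_group_add \<Rightarrow> 'b" and br :: "'b \<Rightarrow> 'b \<Rightarrow> 'b"
  assumes lie: "lie_algebra sc br" and metabelian: "metabelian br"
begin

sublocale V: vector_space sc
  using lie unfolding lie_algebra_def by blast

lemma bracket_add_left: "br (x + y) z = br x z + br y z"
  using lie unfolding lie_algebra_def by blast

lemma bracket_add_right: "br x (y + z) = br x y + br x z"
  using lie unfolding lie_algebra_def by blast

lemma bracket_scale_left: "br (sc c x) y = sc c (br x y)"
  using lie unfolding lie_algebra_def by blast

lemma bracket_scale_right: "br x (sc c y) = sc c (br x y)"
  using lie unfolding lie_algebra_def by blast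

lemma bracket_self: "br x x = 0"
  using lie unfolding lie_algebra_def by blast

lemma jacobi: "br x (br y z) + br y (br z x) + br z (br x y) = 0"
  using lie unfolding lie_algebra_def by blast

lemma bracket_derived: "br (br x1 x2) (br x3 x4) = 0"
  using metabelian unfolding metabelian_def by blast

lemma bracket_zero_left [simp]: "br 0 y = 0"
  using bracket_add_left[of 0 0 y] by simp

lemma bracket_zero_right [simp]: "br y 0 = 0"
  using bracket_add_right[of y 0 0] by simp

lemma bracket_neg_left: "br (- x) y = - br x y"
  using bracket_add_left[of x "- x" y] by (simp add: add_eq_0_iff2)

lemma bracket_anticomm: "br x y = - br y x"
proof -
  have "0 = br (x + y) (x + y)" by (simp only: bracket_self)
  also have "\<dots> = br x (x + y) + br y (x + y)"
    by (rule bracket_add_left)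
  also have "\<dots> = br x y + br y x"
    by (simp add: bracket_add_right bracket_self)
  finally show ?thesis by (simp add: eq_neg_iff_add_eq_0)
qed

lemma bracket_sum_left: "br (\<Sum>i\<in>A. f i) y = (\<Sum>i\<in>A. br (f i) y)"
  by (induction A rule: infinite_finite_induct) (auto simp: bracket_add_left)

lemma bracket_sum_right: "br y (\<Sum>i\<in>A. f i) = (\<Sum>i\<in>A. br y (f i))"
  by (induction A rule: infinite_finite_induct) (auto simp: bracket_add_right)

text \<open>The centralizer of the derived algebra \<open>B\<^sup>2\<close>, which turns out to be \<open>Fit(B)\<close>.\<close>

definition Cent :: "'b set" where
  "Cent = {x. \<forall>y z. br (br y z) x = 0}"

lemma subspace_Cent: "V.subspace Cent"
  unfolding V.subspace_def Cent_def by (auto simp: bracket_add_right bracket_scale_right)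

lemma bracket_in_Cent: "br y z \<in> Cent"
  unfolding Cent_def by (auto simp: bracket_derived)

lemma lie_ideal_Cent: "lie_ideal sc br Cent"
  unfolding lie_ideal_def using subspace_Cent bracket_in_Cent by blast

lemma Cent_scale: "x \<in> Cent \<Longrightarrow> sc c x \<in> Cent"
  using subspace_Cent V.subspace_scale by blast

lemma Cent_sum: "(\<And>i. i \<in> A \<Longrightarrow> f i \<in> Cent) \<Longrightarrow> sum f A \<in> Cent"
  using subspace_Cent V.subspace_sum by blast

lemma lcs_Cent_2: "lcs sc br Cent 2 \<subseteq> {0}"
proof -
  have "V.subspace {x. \<forall>y\<in>Cent. br x y = 0}"
    unfolding V.subspace_def by (auto simp: bracket_add_left bracket_scale_left)
  moreover have "{br x y | x y. x \<in> Cent \<and> y \<in> Cent} \<subseteq> {x. \<forall>y\<in>Cent. br x y = 0}"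
    unfolding Cent_def by auto
  ultimately have "lcs sc br Cent 1 \<subseteq> {x. \<forall>y\<in>Cent. br x y = 0}"
    by (simp add: V.span_minimal)
  then have "{br x y | x y. x \<in> lcs sc br Cent 1 \<and> y \<in> Cent} \<subseteq> {0}"
    by auto
  then show ?thesis
    by (simp add: numeral_eq_Suc V.span_minimal)
qed

lemma Cent_subset_Fit: "Cent \<subseteq> Fit sc br"
proof -
  have "nilpotent_ideal sc br Cent"
    unfolding nilpotent_ideal_def using lie_ideal_Cent lcs_Cent_2 by blast
  then have "Cent \<subseteq> \<Union>{I. nilpotent_ideal sc br I}" by blast
  then show ?thesis
    unfolding Fit_def using V.span_superset by blast
qed

lemma fitf_if_in_Cent: "x \<in> Cent \<Longrightarrow> fitf br x"
  unfolding fitf_def Cent_def by auto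

lemma fitf_iff_in_Cent:
  assumes "Phi2 br"
  shows "fitf br x \<longleftrightarrow> x \<in> Cent"
proof
  assume fx: "fitf br x"
  show "x \<in> Cent"
    unfolding Cent_def mem_Collect_eq
  proof (intro allI)
    fix y z
    have "br (br (br y z) x) (br y z) = 0" by (rule bracket_derived)
    moreover have "br (br (br y z) x) x = - br (br x (br y z)) x"
      using bracket_anticomm bracket_neg_left by metis
    moreover have "br (br x (br y z)) x = 0"
      using fx unfolding fitf_def by blast
    ultimately show "br (br y z) x = 0"
      using assms unfolding Phi2_def by (metis neg_0_equal_iff_equal)
  qed
qed (rule fitf_if_in_Cent)

lemma lcs_subset: "lie_ideal sc br I \<Longrightarrow> lcs sc br I j \<subseteq> I"
proof (induction j)
  case (Suc j)
  then have "{br x y | x y. x \<in> lcs sc br I j \<and> y \<in> I} \<subseteq> I"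
    unfolding lie_ideal_def by blast
  with Suc.prems show ?case
    unfolding lie_ideal_def by (simp add: V.span_minimal)
qed simp

lemma lcs_vanishes_earlier:
  assumes "Phi2 br" and I: "lie_ideal sc br I"
    and zero: "lcs sc br I (Suc (Suc j)) \<subseteq> {0}"
  shows "lcs sc br I (Suc j) \<subseteq> {0}"
proof -
  have "br x y = 0" if x: "x \<in> lcs sc br I j" and y: "y \<in> I" for x y
  proof -
    have xy: "br x y \<in> lcs sc br I (Suc j)"
      using x y by (auto intro: V.span_base)
    have "x \<in> I" using x lcs_subset[OF I] by blast
    then have "br (br x y) x = 0" and "br (br x y) y = 0"
      using xy y zero by (auto intro!: V.span_base)
    then show ?thesis using assms(1) unfolding Phi2_def by blast
  qed
  then have "{br x y | x y. x \<in> lcs sc br I j \<and> y \<in> I} \<subseteq> {0}"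
    by blast
  then show ?thesis by (simp add: V.span_minimal)
qed

lemma lcs_Suc_vanishes:
  assumes "lcs sc br I m \<subseteq> {0}"
  shows "lcs sc br I (Suc m) \<subseteq> {0}"
proof -
  have "{br x y | x y. x \<in> lcs sc br I m \<and> y \<in> I} \<subseteq> {0}"
    using assms by auto
  then show ?thesis by (simp add: V.span_minimal)
qed

lemma nilpotent_ideal_abelian:
  assumes P2: "Phi2 br" and I: "nilpotent_ideal sc br I"
  shows "lcs sc br I 1 \<subseteq> {0}"
proof -
  have ideal: "lie_ideal sc br I"
    using I unfolding nilpotent_ideal_def by blast
  have "lcs sc br I (Suc j) \<subseteq> {0} \<Longrightarrow> lcs sc br I 1 \<subseteq> {0}" for j
  proof (induction j)
    case (Suc j)
    then show ?case using lcs_vanishes_earlier[OF P2 ideal, of j] by blast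
  qed simp
  moreover obtain m where "lcs sc br I m \<subseteq> {0}"
    using I unfolding nilpotent_ideal_def by blast
  ultimately show ?thesis using lcs_Suc_vanishes by blast
qed

lemma nilpotent_ideal_subset_Cent:
  assumes P2: "Phi2 br" and I: "nilpotent_ideal sc br I"
  shows "I \<subseteq> Cent"
proof
  fix x assume x: "x \<in> I"
  have "br (br x y) x = 0" for y
  proof -
    have "br x y \<in> I"
      using x I unfolding nilpotent_ideal_def lie_ideal_def by blast
    then have "br (br x y) x \<in> lcs sc br I 1"
      using x by (auto intro: V.span_base)
    then show ?thesis using nilpotent_ideal_abelian[OF P2 I] by blast
  qed
  then show "x \<in> Cent"
    using fitf_iff_in_Cent[OF P2] unfolding fitf_def by blast
qed

lemma Fit_eq_Cent_if_Phi2: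
  assumes "Phi2 br"
  shows "Fit sc br = Cent"
proof
  show "Fit sc br \<subseteq> Cent"
    unfolding Fit_def using nilpotent_ideal_subset_Cent[OF assms] subspace_Cent
    by (intro V.span_minimal) auto
qed (rule Cent_subset_Fit)

lemma Cent_abelian_if_Phi2:
  assumes "Phi2 br"
  shows "abelian_set br Cent"
  unfolding abelian_set_def
proof (intro ballI)
  fix x w assume "x \<in> Cent" "w \<in> Cent"
  then have "br (br x w) x = 0" "br (br x w) w = 0"
    unfolding Cent_def by blast+
  then show "br x w = 0" using assms unfolding Phi2_def by blast
qed

lemma Fit_eq_Cent_if_abelian:
  assumes "abelian_set br (Fit sc br)"
  shows "Fit sc br = Cent"
  using assms Cent_subset_Fit bracket_in_Cent
  unfolding abelian_set_def Cent_def by blast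

end

section \<open>The monomial action on \<open>Cent\<close>\<close>

definition iter_brackets :: "('b \<Rightarrow> 'b \<Rightarrow> 'b) \<Rightarrow> nat list \<Rightarrow> (nat \<Rightarrow> nat) \<Rightarrow> (nat \<Rightarrow> 'b) \<Rightarrow> 'b \<Rightarrow> 'b" where
  "iter_brackets br xs e t w = foldl (\<lambda>z i. ((\<lambda>w. br w (t i)) ^^ e i) z) w xs"

lemma iter_brackets_Nil [simp]: "iter_brackets br [] e t w = w"
  by (simp add: iter_brackets_def)

lemma iter_brackets_Cons [simp]:
  "iter_brackets br (i # xs) e t w = iter_brackets br xs e t (((\<lambda>w. br w (t i)) ^^ e i) w)"
  by (simp add: iter_brackets_def)

lemma iter_brackets_cong:
  "(\<And>i. i \<in> set xs \<Longrightarrow> e i = e' i \<and> t i = t' i) \<Longrightarrow> iter_brackets br xs e t w = iter_brackets br xs e' t' w"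
  by (induction xs arbitrary: w) auto

lemma mon_act_eq_iter_brackets:
  "mon_act br y m t =
     iter_brackets br (sorted_list_of_set (Poly_Mapping.keys m)) (Poly_Mapping.lookup m) t y"
  by (simp add: mon_act_def iter_brackets_def)

lemma mon_act_zero [simp]: "mon_act br y 0 t = y"
  by (simp add: mon_act_def)

lemma mon_act_single: "mon_act br y (Poly_Mapping.single i 1) t = br y (t i)"
  by (simp add: mon_act_def)

lemma mon_act_cong:
  "(\<And>i. i \<in> Poly_Mapping.keys m \<Longrightarrow> t i = t' i) \<Longrightarrow> mon_act br y m t = mon_act br y m t'"
  unfolding mon_act_eq_iter_brackets by (rule iter_brackets_cong) auto

lemma lookup_add_single:
  "Poly_Mapping.lookup (m + Poly_Mapping.single i 1) =
     (Poly_Mapping.lookup m)(i := Suc (Poly_Mapping.lookup m i))"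
  by (auto simp: lookup_add lookup_single fun_eq_iff)

lemma keys_add_single:
  fixes m :: "nat \<Rightarrow>\<^sub>0 nat"
  shows "Poly_Mapping.keys (m + Poly_Mapping.single i 1) = insert i (Poly_Mapping.keys m)"
  by (rule set_eqI) (auto simp: in_keys_iff lookup_add lookup_single when_def)

locale abelian_Cent_lie = metabelian_lie +
  assumes Cent_abelian: "abelian_set br Cent"
begin

lemma bracket_right_commute:
  assumes "w \<in> Cent"
  shows "br (br w s) t = br (br w t) s"
proof -
  have "br w (br s t) = 0"
    using assms Cent_abelian bracket_in_Cent unfolding abelian_set_def by blast
  moreover have "br s (br t w) = br (br w t) s"
    using bracket_anticomm[of s "br t w"] bracket_anticomm[of t w] bracket_neg_left by simp
  moreover have "br t (br w s) = - br (br w s) t"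
    by (rule bracket_anticomm)
  ultimately show ?thesis
    using jacobi[of w s t] by (simp add: algebra_simps)
qed

lemma funpow_bracket_in_Cent: "w \<in> Cent \<Longrightarrow> ((\<lambda>w. br w s) ^^ k) w \<in> Cent"
  by (induction k) (auto simp: bracket_in_Cent)

lemma funpow_bracket_commute:
  "w \<in> Cent \<Longrightarrow> ((\<lambda>w. br w s) ^^ k) (br w s') = br (((\<lambda>w. br w s) ^^ k) w) s'"
  by (induction k) (auto simp: bracket_right_commute funpow_bracket_in_Cent)

lemma iter_brackets_in_Cent: "w \<in> Cent \<Longrightarrow> iter_brackets br xs e t w \<in> Cent"
  by (induction xs arbitrary: w) (auto simp: funpow_bracket_in_Cent)

lemma iter_brackets_bracket:
  "w \<in> Cent \<Longrightarrow> iter_brackets br xs e t (br w s) = br (iter_brackets br xs e t w) s"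
  by (induction xs arbitrary: w)
    (auto simp: funpow_bracket_commute funpow_bracket_in_Cent bracket_in_Cent)

lemma iter_brackets_funpow:
  "w \<in> Cent \<Longrightarrow> iter_brackets br xs e t (((\<lambda>w. br w s) ^^ k) w)
     = ((\<lambda>w. br w s) ^^ k) (iter_brackets br xs e t w)"
  by (induction k) (auto simp: iter_brackets_bracket funpow_bracket_in_Cent)

lemma iter_brackets_incr:
  assumes "distinct xs" "i \<in> set xs" "w \<in> Cent"
  shows "iter_brackets br xs (e(i := Suc (e i))) t w = br (iter_brackets br xs e t w) (t i)"
  using assms
proof (induction xs arbitrary: w)
  case (Cons j xs)
  show ?case
  proof (cases "j = i")
    case True
    then have "i \<notin> set xs" using Cons.prems by simp
    then have unchanged: "iter_brackets br xs (e(i := Suc (e i))) t = iter_brackets br xs e t"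
      by (intro ext iter_brackets_cong) auto
    have "iter_brackets br (j # xs) (e(i := Suc (e i))) t w
        = iter_brackets br xs e t (br (((\<lambda>w. br w (t i)) ^^ e i) w) (t i))"
      by (simp only: True iter_brackets_Cons fun_upd_same unchanged funpow.simps(2) o_apply)
    also have "\<dots> = br (iter_brackets br (j # xs) e t w) (t i)"
      using True Cons.prems by (simp add: iter_brackets_bracket funpow_bracket_in_Cent)
    finally show ?thesis .
  next
    case False
    with Cons show ?thesis by (simp add: funpow_bracket_in_Cent)
  qed
qed simp

lemma iter_brackets_insort:
  assumes "i \<notin> set xs" "w \<in> Cent"
  shows "iter_brackets br (insort i xs) e t w = ((\<lambda>w. br w (t i)) ^^ e i) (iter_brackets br xs e t w)"
  using assms
proof (induction xs arbitrary: w)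
  case (Cons j xs)
  show ?case
  proof (cases "i \<le> j")
    case True
    then have "iter_brackets br (insort i (j # xs)) e t w
        = iter_brackets br (j # xs) e t (((\<lambda>w. br w (t i)) ^^ e i) w)"
      by simp
    also have "\<dots> = ((\<lambda>w. br w (t i)) ^^ e i) (iter_brackets br (j # xs) e t w)"
      using Cons.prems by (intro iter_brackets_funpow)
    finally show ?thesis .
  next
    case False
    then have "iter_brackets br (insort i (j # xs)) e t w
        = iter_brackets br (insort i xs) e t (((\<lambda>w. br w (t j)) ^^ e j) w)"
      by simp
    also have "\<dots> = ((\<lambda>w. br w (t i)) ^^ e i) (iter_brackets br (j # xs) e t w)"
      using Cons by (simp add: funpow_bracket_in_Cent)
    finally show ?thesis .
  qed
qed simp

text \<open>On \<open>Cent\<close> the right multiplications commute, so the order in which \<open>mon_act\<close> applies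
  the variables is irrelevant and one more factor is just one more bracket.\<close>

lemma mon_act_add_single:
  assumes y: "y \<in> Cent"
  shows "mon_act br y (m + Poly_Mapping.single i 1) t = br (mon_act br y m t) (t i)"
proof (cases "i \<in> Poly_Mapping.keys m")
  case True
  then have "Poly_Mapping.keys (m + Poly_Mapping.single i 1) = Poly_Mapping.keys m"
    using keys_add_single[of m i] by (simp add: insert_absorb)
  with True y show ?thesis
    unfolding mon_act_eq_iter_brackets lookup_add_single by (simp add: iter_brackets_incr)
next
  case False
  let ?xs = "sorted_list_of_set (Poly_Mapping.keys m)"
    and ?e = "(Poly_Mapping.lookup m)(i := Suc (Poly_Mapping.lookup m i))"
  have "mon_act br y (m + Poly_Mapping.single i 1) t = iter_brackets br (insort i ?xs) ?e t y"
    unfolding mon_act_eq_iter_brackets lookup_add_single keys_add_single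
    using False by (simp add: sorted_list_of_set_insert)
  also have "\<dots> = br (iter_brackets br ?xs ?e t y) (t i)"
    using False y by (simp add: iter_brackets_insort in_keys_iff)
  also have "iter_brackets br ?xs ?e t y = mon_act br y m t"
    unfolding mon_act_eq_iter_brackets using False by (intro iter_brackets_cong) auto
  finally show ?thesis .
qed

lemma mon_act_in_Cent: "y \<in> Cent \<Longrightarrow> mon_act br y m t \<in> Cent"
  unfolding mon_act_eq_iter_brackets by (rule iter_brackets_in_Cent)

lemma mon_act_bracket: "y \<in> Cent \<Longrightarrow> mon_act br (br y s) m t = br (mon_act br y m t) s"
  unfolding mon_act_eq_iter_brackets by (rule iter_brackets_bracket)

lemma poly_act_bracket:
  "u \<in> Cent \<Longrightarrow> poly_act sc br (br u s) f t = br (poly_act sc br u f t) s"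
  unfolding poly_act_def by (simp add: bracket_sum_left bracket_scale_left mon_act_bracket)

end

section \<open>Linear algebra over a finite field\<close>

context module
begin

lemma span_image_eq_range_sum:
  assumes "finite I"
  shows "span (fam ` I) = range (\<lambda>c. \<Sum>i\<in>I. scale (c i) (fam i))"
proof
  show "range (\<lambda>c. \<Sum>i\<in>I. scale (c i) (fam i)) \<subseteq> span (fam ` I)"
    by (auto intro: span_sum span_scale span_base)
next
  let ?R = "range (\<lambda>c. \<Sum>i\<in>I. scale (c i) (fam i))"
  have "subspace ?R"
    unfolding subspace_def
  proof (intro conjI ballI allI)
    show "0 \<in> ?R" by (rule range_eqI[of _ _ "\<lambda>_. 0"]) simp
  next
    fix x y assume "x \<in> ?R" "y \<in> ?R"
    then obtain c c' where "x = (\<Sum>i\<in>I. scale (c i) (fam i))" "y = (\<Sum>i\<in>I. scale (c' i) (fam i))"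
      by blast
    then show "x + y \<in> ?R"
      by (intro range_eqI[of _ _ "\<lambda>i. c i + c' i"]) (simp add: scale_left_distrib sum.distrib)
  next
    fix a x assume "x \<in> ?R"
    then obtain c where "x = (\<Sum>i\<in>I. scale (c i) (fam i))" by blast
    then show "scale a x \<in> ?R"
      by (intro range_eqI[of _ _ "\<lambda>i. a * c i"]) (simp add: scale_sum_right)
  qed
  moreover have "fam j \<in> ?R" if "j \<in> I" for j
  proof (rule range_eqI[of _ _ "\<lambda>i. if i = j then 1 else 0"])
    show "fam j = (\<Sum>i\<in>I. scale (if i = j then 1 else 0) (fam i))"
    proof -
      have "(\<Sum>i\<in>I. scale (if i = j then 1 else 0) (fam i)) = (\<Sum>i\<in>I. if i = j then fam j else 0)"
        by (rule sum.cong) auto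
      then show ?thesis using that assms by simp
    qed
  qed
  ultimately show "span (fam ` I) \<subseteq> ?R"
    by (intro span_minimal) auto
qed

end

lemma card_field_ge_2: "2 \<le> card (UNIV :: 'k::{field,finite} set)"
proof -
  have "card {0::'k, 1} = 2" by simp
  moreover have "card {0::'k, 1} \<le> card (UNIV :: 'k set)" by (rule card_mono) auto
  ultimately show ?thesis by simp
qed

text \<open>Over a finite field, linear independence of a finite family is detected by counting:
  its span has at most \<open>|k|\<^sup>|I|\<^sup>\<close> elements, with equality exactly when the family is independent.\<close>

locale finite_field_vector_space = vector_space scale
  for scale :: "'k::{field,finite} \<Rightarrow> 'b::ab_group_add \<Rightarrow> 'b"
begin

lemma span_image_eq_image_PiE:
  assumes "finite I"
  shows "span (fam ` I) = (\<lambda>c. \<Sum>i\<in>I. scale (c i) (fam i)) ` PiE I (\<lambda>_. UNIV)"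
proof -
  have restrict_eq: "(\<Sum>i\<in>I. scale (c i) (fam i)) = (\<Sum>i\<in>I. scale (restrict c I i) (fam i))" for c
    by (rule sum.cong) auto
  have "range (\<lambda>c. \<Sum>i\<in>I. scale (c i) (fam i))
      \<subseteq> (\<lambda>c. \<Sum>i\<in>I. scale (c i) (fam i)) ` PiE I (\<lambda>_. UNIV)"
  proof (rule image_subsetI)
    fix c
    show "(\<Sum>i\<in>I. scale (c i) (fam i)) \<in> (\<lambda>c. \<Sum>i\<in>I. scale (c i) (fam i)) ` PiE I (\<lambda>_. UNIV)"
      by (rule image_eqI[of _ _ "restrict c I"]) (use restrict_eq in auto)
  qed
  then show ?thesis
    unfolding span_image_eq_range_sum[OF assms] by auto
qed

lemma card_span_image_le:
  assumes "finite I"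
  shows "card (span (fam ` I)) \<le> card (UNIV :: 'k set) ^ card I"
  unfolding span_image_eq_image_PiE[OF assms]
  by (rule order_trans[OF card_image_le]) (simp_all add: assms finite_PiE card_PiE)

lemma card_span_image_independent:
  assumes "finite I" and indep: "\<And>c. (\<Sum>i\<in>I. scale (c i) (fam i)) = 0 \<Longrightarrow> \<forall>i\<in>I. c i = 0"
  shows "card (span (fam ` I)) = card (UNIV :: 'k set) ^ card I"
proof -
  have "inj_on (\<lambda>c. \<Sum>i\<in>I. scale (c i) (fam i)) (PiE I (\<lambda>_. UNIV))"
  proof (rule inj_onI)
    fix c c' assume c: "c \<in> PiE I (\<lambda>_. UNIV)" and c': "c' \<in> PiE I (\<lambda>_. UNIV)"
      and eq: "(\<Sum>i\<in>I. scale (c i) (fam i)) = (\<Sum>i\<in>I. scale (c' i) (fam i))"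
    have "(\<Sum>i\<in>I. scale (c i - c' i) (fam i)) = 0"
      using eq by (simp add: scale_left_diff_distrib sum_subtractf)
    then have "\<forall>i\<in>I. c i - c' i = 0" by (rule indep)
    then show "c = c'"
      using c c' by (intro PiE_ext) auto
  qed
  then show ?thesis
    unfolding span_image_eq_image_PiE[OF assms(1)] by (simp add: card_image card_PiE assms(1))
qed

lemma independent_if_card_span_image:
  assumes "finite I" and card: "card (span (fam ` I)) = card (UNIV :: 'k set) ^ card I"
    and zero: "(\<Sum>i\<in>I. scale (c i) (fam i)) = 0"
  shows "\<forall>i\<in>I. c i = 0"
proof -
  let ?lc = "\<lambda>c. \<Sum>i\<in>I. scale (c i) (fam i)"
  have inj: "inj_on ?lc (PiE I (\<lambda>_. UNIV))"
    by (rule eq_card_imp_inj_on)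
      (use card assms(1) in \<open>simp_all add: span_image_eq_image_PiE card_PiE finite_PiE\<close>)
  have "?lc (restrict c I) = ?lc (restrict (\<lambda>_. 0) I)"
    using zero by simp
  then have "restrict c I = restrict (\<lambda>_. 0) I"
    by (rule inj_onD[OF inj]) auto
  then show ?thesis by (metis restrict_apply')
qed

end

text \<open>More unknowns than equations; over a finite field, pigeonhole suffices.\<close>

lemma exists_nontrivial_solution:
  fixes M :: "nat \<Rightarrow> nat \<Rightarrow> 'k::{field,finite}"
  assumes "n < p"
  shows "\<exists>d. (\<exists>i<p. d i \<noteq> 0) \<and> (\<forall>j<n. (\<Sum>i<p. d i * M i j) = 0)"
proof -
  define L where "L c = restrict (\<lambda>j. \<Sum>i<p. c i * M i j) {..<n}" for c :: "nat \<Rightarrow> 'k"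
  define D where "D = PiE {..<p} (\<lambda>_. (UNIV :: 'k set))"
  have "L ` D \<subseteq> PiE {..<n} (\<lambda>_. UNIV)"
    unfolding L_def by (auto simp: PiE_def)
  then have "card (L ` D) \<le> card (PiE {..<n} (\<lambda>_. (UNIV :: 'k set)))"
    by (intro card_mono) (auto intro: finite_PiE)
  also have "\<dots> = card (UNIV :: 'k set) ^ n" by (simp add: card_PiE)
  also have "\<dots> < card (UNIV :: 'k set) ^ p"
    using card_field_ge_2[where 'k='k] assms by (intro power_strict_increasing) auto
  also have "\<dots> = card D" unfolding D_def by (simp add: card_PiE)
  finally have "\<not> inj_on L D" by (rule pigeonhole)
  then obtain c c' where cc: "c \<in> D" "c' \<in> D" "c \<noteq> c'" "L c = L c'"
    unfolding inj_on_def by blast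
  then obtain i where i: "c i \<noteq> c' i" by blast
  then have "i < p" using cc(1,2) unfolding D_def by (metis PiE_arb lessThan_iff)
  moreover have "(\<Sum>i<p. (c i - c' i) * M i j) = 0" if "j < n" for j
    using fun_cong[OF cc(4), of j] that unfolding L_def by (simp add: left_diff_distrib sum_subtractf)
  ultimately show ?thesis
    using i by (intro exI[of _ "\<lambda>i. c i - c' i"]) auto
qed

section \<open>Independence modulo \<open>Cent\<close>\<close>

context metabelian_lie
begin

definition indep_mod :: "nat \<Rightarrow> (nat \<Rightarrow> 'b) \<Rightarrow> bool" where
  "indep_mod n y \<longleftrightarrow> (\<forall>c. (\<Sum>i<n. sc (c i) (y i)) \<in> Cent \<longrightarrow> (\<forall>i<n. c i = 0))"

lemma quot_basis_Cent_iff: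
  "quot_basis sc Cent b n \<longleftrightarrow> indep_mod n b \<and> V.span (Cent \<union> b ` {..<n}) = UNIV"
  unfolding quot_basis_def indep_mod_def by simp

lemma phi_iff_indep_mod: "Phi2 br \<Longrightarrow> phi sc br n x \<longleftrightarrow> indep_mod n x"
  unfolding phi_def indep_mod_def using fitf_iff_in_Cent by blast

lemma indep_mod_mono:
  assumes "indep_mod p y" "q \<le> p"
  shows "indep_mod q y"
  unfolding indep_mod_def
proof (rule allI, rule impI)
  fix c assume q: "(\<Sum>i<q. sc (c i) (y i)) \<in> Cent"
  define c' where "c' i = (if i < q then c i else 0)" for i
  have "(\<Sum>i<p. sc (c' i) (y i)) = (\<Sum>i<q. sc (c' i) (y i))"
    by (rule sum.mono_neutral_right) (use assms(2) in \<open>auto simp: c'_def\<close>)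
  also have "\<dots> = (\<Sum>i<q. sc (c i) (y i))"
    by (rule sum.cong) (auto simp: c'_def)
  finally have "\<forall>i<p. c' i = 0"
    using assms(1) q unfolding indep_mod_def by metis
  then show "\<forall>i<q. c i = 0"
    using assms(2) unfolding c'_def by (metis less_le_trans)
qed

lemma indep_mod_single: "y \<notin> Cent \<Longrightarrow> indep_mod 1 (\<lambda>_. y)"
  unfolding indep_mod_def
proof (intro allI impI)
  fix c :: "nat \<Rightarrow> 'k" and i
  assume "y \<notin> Cent" "(\<Sum>i<1. sc (c i) y) \<in> Cent" "i < (1::nat)"
  then show "c i = 0"
    using Cent_scale[of "sc (c 0) y" "inverse (c 0)"] by (cases "c 0 = 0") auto
qed

lemma not_in_Cent_if_indep_mod:
  assumes "indep_mod n b" "j < n"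
  shows "b j \<notin> Cent"
proof
  assume "b j \<in> Cent"
  have "(\<Sum>i<n. sc (if i = j then 1 else 0) (b i)) = (\<Sum>i<n. if i = j then b j else 0)"
    by (rule sum.cong) auto
  also have "\<dots> = b j" using assms(2) by simp
  finally have "(\<Sum>i<n. sc (if i = j then 1 else 0) (b i)) \<in> Cent"
    using \<open>b j \<in> Cent\<close> by simp
  from assms(1)[unfolded indep_mod_def, rule_format, OF this assms(2)]
  show False by simp
qed

lemma span_Cent_repr:
  fixes n :: nat
  assumes "v \<in> V.span (Cent \<union> y ` {..<n})"
  obtains c f where "f \<in> Cent" "v = (\<Sum>i<n. sc (c i) (y i)) + f"
proof -
  obtain f w where "f \<in> V.span Cent" "w \<in> V.span (y ` {..<n})" "v = f + w"
    using assms unfolding V.span_Un by blast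
  moreover have "V.span Cent = Cent"
    using subspace_Cent by simp
  moreover obtain c where "w = (\<Sum>i<n. sc (c i) (y i))"
    using \<open>w \<in> V.span (y ` {..<n})\<close> V.span_image_eq_range_sum[OF finite_lessThan, of y n] by auto
  ultimately show ?thesis
    using that by (simp add: add.commute)
qed

lemma in_span_if_not_indep_mod_extension:
  assumes indep: "indep_mod p y" and dep: "\<not> indep_mod (Suc p) (y(p := v))"
  shows "v \<in> V.span (Cent \<union> y ` {..<p})"
proof -
  obtain c where c: "(\<Sum>i<Suc p. sc (c i) ((y(p := v)) i)) \<in> Cent" "\<exists>i<Suc p. c i \<noteq> 0"
    using dep unfolding indep_mod_def by blast
  have split: "(\<Sum>i<Suc p. sc (c i) ((y(p := v)) i)) = (\<Sum>i<p. sc (c i) (y i)) + sc (c p) v"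
    by simp
  have cp: "c p \<noteq> 0"
  proof
    assume "c p = 0"
    then have "\<forall>i<p. c i = 0"
      using c(1) indep unfolding split indep_mod_def by simp
    then show False using c(2) \<open>c p = 0\<close> less_Suc_eq by blast
  qed
  have "sc (c p) v = (\<Sum>i<Suc p. sc (c i) ((y(p := v)) i)) - (\<Sum>i<p. sc (c i) (y i))"
    unfolding split by simp
  also have "\<dots> \<in> V.span (Cent \<union> y ` {..<p})"
    using c(1) by (intro V.span_diff V.span_sum V.span_scale V.span_base) auto
  finally have "sc (inverse (c p)) (sc (c p) v) \<in> V.span (Cent \<union> y ` {..<p})"
    by (rule V.span_scale)
  then show ?thesis using cp by simp
qed

lemma exists_quot_basis_if_indep_mod_bounded:
  assumes bound: "\<And>p y. indep_mod p y \<Longrightarrow> p \<le> r"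
  shows "\<exists>n b. n \<le> r \<and> quot_basis sc Cent b n"
proof -
  define S where "S = {p. \<exists>y. indep_mod p y}"
  have "0 \<in> S" unfolding S_def indep_mod_def by simp
  moreover have "S \<subseteq> {..r}"
    using bound unfolding S_def by blast
  then have fin: "finite S"
    using finite_subset by blast
  ultimately have "Max S \<in> S" by (intro Max_in) auto
  then obtain y where y: "indep_mod (Max S) y" unfolding S_def by blast
  have "v \<in> V.span (Cent \<union> y ` {..<Max S})" for v
  proof (rule in_span_if_not_indep_mod_extension[OF y])
    show "\<not> indep_mod (Suc (Max S)) (y(Max S := v))"
      using Max_ge[OF fin, of "Suc (Max S)"] unfolding S_def by auto
  qed
  then show ?thesis
    using y bound[OF y] unfolding quot_basis_Cent_iff by blast
qed

lemma bracket_zero_if_zero_on_spanning: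
  assumes "\<And>y. y \<in> S \<Longrightarrow> br u y = 0" "V.span S = UNIV"
  shows "br u y = 0"
proof -
  have "V.subspace {y. br u y = 0}"
    unfolding V.subspace_def by (auto simp: bracket_add_right bracket_scale_right)
  then have "V.span S \<subseteq> {y. br u y = 0}"
    using assms(1) by (intro V.span_minimal) auto
  then show ?thesis using assms(2) by auto
qed

end

locale finite_metabelian_lie = metabelian_lie sc br
  for sc :: "'k::{field,finite} \<Rightarrow> 'b::ab_group_add \<Rightarrow> 'b" and br
begin

sublocale F: finite_field_vector_space sc ..

lemma indep_mod_length_le:
  fixes n p :: nat
  assumes indep: "indep_mod p y" and span: "\<forall>i<p. y i \<in> V.span (Cent \<union> b ` {..<n})"
  shows "p \<le> n"
proof (rule ccontr)
  assume "\<not> p \<le> n"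
  have "\<forall>i\<in>{..<p}. \<exists>M f. f \<in> Cent \<and> y i = (\<Sum>j<n. sc (M j) (b j)) + f"
    using span span_Cent_repr by (metis lessThan_iff)
  then obtain M F where MF: "\<And>i. i < p \<Longrightarrow> F i \<in> Cent \<and> y i = (\<Sum>j<n. sc (M i j) (b j)) + F i"
    by (metis lessThan_iff)
  obtain d where d: "\<exists>i<p. d i \<noteq> 0" "\<forall>j<n. (\<Sum>i<p. d i * M i j) = 0"
    using exists_nontrivial_solution[of n p M] \<open>\<not> p \<le> n\<close> by auto
  have "(\<Sum>i<p. sc (d i) (y i))
      = (\<Sum>j<n. sc (\<Sum>i<p. d i * M i j) (b j)) + (\<Sum>i<p. sc (d i) (F i))"
    using MF by (simp add: V.scale_right_distrib sum.distrib V.scale_sum_right V.scale_sum_left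
        sum.swap[of _ "{..<p}"])
  also have "\<dots> = (\<Sum>i<p. sc (d i) (F i))"
    using d(2) by simp
  also have "\<dots> \<in> Cent"
    using MF by (intro Cent_sum Cent_scale) simp
  finally have "(\<Sum>i<p. sc (d i) (y i)) \<in> Cent" .
  then show False
    using indep d(1) unfolding indep_mod_def by blast
qed

lemma indep_mod_extend_spanning:
  fixes j :: nat
  assumes x: "indep_mod m x"
  shows "\<exists>p z. m \<le> p \<and> (\<forall>i<m. z i = x i) \<and> indep_mod p z
           \<and> (\<forall>i<j. b i \<in> V.span (Cent \<union> z ` {..<p}))"
proof (induction j)
  case 0
  then show ?case using x by blast
next
  case (Suc j)
  then obtain p z where pz: "m \<le> p" "\<forall>i<m. z i = x i" "indep_mod p z"
    and spans: "\<forall>i<j. b i \<in> V.span (Cent \<union> z ` {..<p})"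
    by blast
  show ?case
  proof (cases "indep_mod (Suc p) (z(p := b j))")
    case True
    have "z ` {..<p} \<subseteq> (z(p := b j)) ` {..<Suc p}" by force
    then have "V.span (Cent \<union> z ` {..<p}) \<subseteq> V.span (Cent \<union> (z(p := b j)) ` {..<Suc p})"
      by (intro V.span_mono) auto
    moreover have "b j \<in> V.span (Cent \<union> (z(p := b j)) ` {..<Suc p})"
      by (rule V.span_base) (auto intro: image_eqI[of _ _ p])
    ultimately have "\<forall>i<Suc j. b i \<in> V.span (Cent \<union> (z(p := b j)) ` {..<Suc p})"
      using spans less_Suc_eq by auto
    moreover have "\<forall>i<m. (z(p := b j)) i = x i"
      using pz by auto
    ultimately show ?thesis
      using True pz(1) le_SucI by blast
  next
    case False
    then have "b j \<in> V.span (Cent \<union> z ` {..<p})"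
      using in_span_if_not_indep_mod_extension pz(3) by blast
    with pz spans show ?thesis
      using less_Suc_eq by auto
  qed
qed

lemma indep_mod_extend_to_quot_basis:
  assumes b: "quot_basis sc Cent b n" and x: "indep_mod m x"
  shows "\<exists>p z. m \<le> p \<and> p \<le> n \<and> (\<forall>i<m. z i = x i) \<and> quot_basis sc Cent z p"
proof -
  obtain p z where pz: "m \<le> p" "\<forall>i<m. z i = x i" "indep_mod p z"
    and spans: "\<forall>i<n. b i \<in> V.span (Cent \<union> z ` {..<p})"
    using indep_mod_extend_spanning[OF x] by blast
  have "Cent \<union> b ` {..<n} \<subseteq> V.span (Cent \<union> z ` {..<p})"
    using spans V.span_superset by blast
  then have "V.span (Cent \<union> b ` {..<n}) \<subseteq> V.span (Cent \<union> z ` {..<p})"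
    by (intro V.span_minimal) auto
  then have "V.span (Cent \<union> z ` {..<p}) = UNIV"
    using b unfolding quot_basis_Cent_iff by auto
  moreover have "p \<le> n"
    using indep_mod_length_le[OF pz(3)] b unfolding quot_basis_Cent_iff by auto
  ultimately show ?thesis
    using pz unfolding quot_basis_Cent_iff by blast
qed

end

section \<open>Torsion-freeness\<close>

definition total_degree :: "(nat \<Rightarrow>\<^sub>0 nat) \<Rightarrow> nat" where
  "total_degree a = sum (Poly_Mapping.lookup a) (Poly_Mapping.keys a)"

definition monomials :: "nat \<Rightarrow> nat \<Rightarrow> (nat \<Rightarrow>\<^sub>0 nat) set" where
  "monomials n d = {a. Poly_Mapping.keys a \<subseteq> {..<n} \<and> total_degree a \<le> d}"

lemma total_degree_eq_sum:
  "finite K \<Longrightarrow> Poly_Mapping.keys a \<subseteq> K \<Longrightarrow> total_degree a = sum (Poly_Mapping.lookup a) K"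
  unfolding total_degree_def by (rule sum.mono_neutral_left) (auto simp: in_keys_iff)

lemma total_degree_zero [simp]: "total_degree 0 = 0"
  by (simp add: total_degree_def)

lemma total_degree_add_single: "total_degree (a + Poly_Mapping.single i 1) = Suc (total_degree a)"
proof -
  let ?K = "insert i (Poly_Mapping.keys a)"
  have "total_degree (a + Poly_Mapping.single i 1)
      = sum (Poly_Mapping.lookup (a + Poly_Mapping.single i 1)) ?K"
    by (rule total_degree_eq_sum) (use keys_add_single[of a i] in auto)
  also have "\<dots> = sum (Poly_Mapping.lookup a) ?K + sum (Poly_Mapping.lookup (Poly_Mapping.single i 1)) ?K"
    by (simp add: lookup_add sum.distrib)
  also have "sum (Poly_Mapping.lookup a) ?K = total_degree a"
    by (rule total_degree_eq_sum[symmetric]) auto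
  also have "sum (Poly_Mapping.lookup (Poly_Mapping.single i (1::nat))) ?K = 1"
    by (simp add: lookup_single when_def)
  finally show ?thesis by simp
qed

lemma lookup_le_total_degree: "Poly_Mapping.lookup a i \<le> total_degree a"
  by (cases "i \<in> Poly_Mapping.keys a") (auto simp: total_degree_def in_keys_iff intro: member_le_sum)

lemma total_degree_Suc_split:
  assumes "total_degree a = Suc k"
  obtains b i where "a = b + Poly_Mapping.single i 1" "total_degree b = k"
proof -
  have "a \<noteq> 0" using assms by auto
  then obtain i where i: "i \<in> Poly_Mapping.keys a" by (meson ex_in_conv keys_eq_empty)
  define b where "b = a - Poly_Mapping.single i 1"
  have "a = b + Poly_Mapping.single i 1"
    using i by (intro poly_mapping_eqI)
      (auto simp: b_def lookup_minus lookup_add lookup_single when_def in_keys_iff)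
  moreover have "total_degree b = k"
    using total_degree_add_single[of b i] calculation assms by simp
  ultimately show ?thesis by (rule that)
qed

lemma monomial_induct [case_names zero add_single]:
  fixes P :: "(nat \<Rightarrow>\<^sub>0 nat) \<Rightarrow> bool"
  assumes "P 0" "\<And>b i. P b \<Longrightarrow> P (b + Poly_Mapping.single i 1)"
  shows "P a"
proof -
  have "\<forall>a. total_degree a = k \<longrightarrow> P a" for k
  proof (induction k)
    case 0
    have "total_degree a = 0 \<Longrightarrow> a = 0" for a
      by (auto simp: total_degree_def in_keys_iff intro!: poly_mapping_eqI)
    then show ?case using assms(1) by auto
  next
    case (Suc k)
    then show ?case using total_degree_Suc_split assms(2) by metis
  qed
  then show ?thesis by blast
qed

lemma finite_monomials: "finite (monomials n d)"
proof (rule inj_on_finite)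
  show "inj_on (\<lambda>a. restrict (Poly_Mapping.lookup a) {..<n}) (monomials n d)"
  proof (rule inj_onI)
    fix a b assume ab: "a \<in> monomials n d" "b \<in> monomials n d"
      and eq: "restrict (Poly_Mapping.lookup a) {..<n} = restrict (Poly_Mapping.lookup b) {..<n}"
    show "a = b"
    proof (rule poly_mapping_eqI)
      fix k
      show "Poly_Mapping.lookup a k = Poly_Mapping.lookup b k"
      proof (cases "k < n")
        case True
        then show ?thesis using fun_cong[OF eq, of k] by simp
      next
        case False
        then have "k \<notin> Poly_Mapping.keys a" "k \<notin> Poly_Mapping.keys b"
          using ab unfolding monomials_def by auto
        then show ?thesis by (simp add: in_keys_iff)
      qed
    qed
  qed
  show "(\<lambda>a. restrict (Poly_Mapping.lookup a) {..<n}) ` monomials n d \<subseteq> PiE {..<n} (\<lambda>_. {..d})"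
    unfolding monomials_def
    by (auto simp: PiE_def extensional_def intro: order_trans[OF lookup_le_total_degree])
qed (intro finite_PiE; simp)

lemma monomials_mono: "n \<le> n' \<Longrightarrow> d \<le> d' \<Longrightarrow> monomials n d \<subseteq> monomials n' d'"
  unfolding monomials_def by auto

lemma zero_in_monomials: "0 \<in> monomials n d"
  unfolding monomials_def by simp

lemma add_single_in_monomials:
  "a \<in> monomials n d \<Longrightarrow> i < n \<Longrightarrow> a + Poly_Mapping.single i 1 \<in> monomials n (Suc d)"
  unfolding monomials_def using keys_add_single[of a i] total_degree_add_single[of a i] by auto

context metabelian_lie
begin

definition torsion_free :: "nat \<Rightarrow> (nat \<Rightarrow> 'b) \<Rightarrow> bool" where
  "torsion_free n b \<longleftrightarrow>
     (\<forall>f. f \<noteq> 0 \<and> poly_in_vars n f \<longrightarrow> (\<forall>u\<in>Cent. poly_act sc br u f b = 0 \<longrightarrow> u = 0))"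

lemma poly_act_eq_sum_superset:
  assumes "finite I" "Poly_Mapping.keys f \<subseteq> I"
  shows "poly_act sc br u f t = (\<Sum>m\<in>I. sc (Poly_Mapping.lookup f m) (mon_act br u m t))"
  unfolding poly_act_def by (rule sum.mono_neutral_left) (use assms in \<open>auto simp: in_keys_iff\<close>)

end

locale finite_abelian_Cent_lie = abelian_Cent_lie sc br
  for sc :: "'k::{field,finite} \<Rightarrow> 'b::ab_group_add \<Rightarrow> 'b" and br

sublocale finite_abelian_Cent_lie \<subseteq> finite_metabelian_lie ..

context finite_abelian_Cent_lie
begin

lemma bracket_span_mon_act:
  assumes w: "w \<in> V.span ((\<lambda>a. mon_act br u a s) ` monomials k d)"
    and y: "y \<in> V.span (Cent \<union> s ` {..<k})" and u: "u \<in> Cent"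
  shows "br w y \<in> V.span ((\<lambda>a. mon_act br u a s) ` monomials k (Suc d))"
proof -
  let ?S = "V.span ((\<lambda>a. mon_act br u a s) ` monomials k (Suc d))"
  obtain c f where f: "f \<in> Cent" and y_eq: "y = (\<Sum>j<k. sc (c j) (s j)) + f"
    using span_Cent_repr[OF y] by blast
  have "br (mon_act br u a s) y \<in> ?S" if a: "a \<in> monomials k d" for a
  proof -
    have "br (mon_act br u a s) f = 0"
      using mon_act_in_Cent[OF u] f Cent_abelian unfolding abelian_set_def by blast
    moreover have "br (mon_act br u a s) (s j) = mon_act br u (a + Poly_Mapping.single j 1) s" for j
      by (rule mon_act_add_single[OF u, symmetric])
    ultimately have "br (mon_act br u a s) y
        = (\<Sum>j<k. sc (c j) (mon_act br u (a + Poly_Mapping.single j 1) s))"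
      unfolding y_eq by (simp add: bracket_add_right bracket_sum_right bracket_scale_right)
    also have "\<dots> \<in> ?S"
      using a add_single_in_monomials by (intro V.span_sum V.span_scale V.span_base) auto
    finally show ?thesis .
  qed
  moreover have "V.subspace {w. br w y \<in> ?S}"
    unfolding V.subspace_def
    by (auto simp: bracket_add_left bracket_scale_left intro: V.span_add V.span_scale V.span_zero)
  ultimately have "V.span ((\<lambda>a. mon_act br u a s) ` monomials k d) \<subseteq> {w. br w y \<in> ?S}"
    by (intro V.span_minimal) auto
  then show ?thesis using w by blast
qed

lemma mon_act_in_span_mon_act:
  assumes u: "u \<in> Cent" and t: "\<forall>i<p. t i \<in> V.span (Cent \<union> s ` {..<k})"
    and a: "Poly_Mapping.keys a \<subseteq> {..<p}"
  shows "mon_act br u a t \<in> V.span ((\<lambda>b. mon_act br u b s) ` monomials k (total_degree a))"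
  using a
proof (induction a rule: monomial_induct)
  case zero
  have "mon_act br u 0 s \<in> (\<lambda>b. mon_act br u b s) ` monomials k 0"
    by (rule imageI[OF zero_in_monomials])
  then show ?case by (auto intro: V.span_base)
next
  case (add_single b i)
  then have "Poly_Mapping.keys b \<subseteq> {..<p}" and "i < p"
    using keys_add_single[of b i] by auto
  then have "br (mon_act br u b t) (t i)
      \<in> V.span ((\<lambda>b. mon_act br u b s) ` monomials k (Suc (total_degree b)))"
    using add_single.IH t u by (intro bracket_span_mon_act) auto
  then show ?case
    by (simp only: mon_act_add_single[OF u] total_degree_add_single)
qed

lemma span_mon_act_subset:
  assumes u: "u \<in> Cent" and z: "\<forall>i<p. z i \<in> V.span (Cent \<union> b ` {..<n})"
  shows "V.span ((\<lambda>a. mon_act br u a z) ` monomials p d)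
       \<subseteq> V.span ((\<lambda>a. mon_act br u a b) ` monomials n d)"
proof (rule V.span_minimal)
  show "(\<lambda>a. mon_act br u a z) ` monomials p d \<subseteq> V.span ((\<lambda>a. mon_act br u a b) ` monomials n d)"
  proof clarify
    fix a assume a: "a \<in> monomials p d"
    then have "mon_act br u a z \<in> V.span ((\<lambda>a. mon_act br u a b) ` monomials n (total_degree a))"
      using u z by (intro mon_act_in_span_mon_act) (auto simp: monomials_def)
    moreover have "monomials n (total_degree a) \<subseteq> monomials n d"
      using a unfolding monomials_def by auto
    ultimately show "mon_act br u a z \<in> V.span ((\<lambda>a. mon_act br u a b) ` monomials n d)"
      using V.span_mono[OF image_mono] by blast
  qed
qed simp

lemma card_span_mon_act:
  assumes tf: "torsion_free n b" and u: "u \<in> Cent" "u \<noteq> 0"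
  shows "card (V.span ((\<lambda>a. mon_act br u a b) ` monomials n d))
       = card (UNIV :: 'k set) ^ card (monomials n d)"
proof (rule F.card_span_image_independent[OF finite_monomials])
  fix c assume c: "(\<Sum>a\<in>monomials n d. sc (c a) (mon_act br u a b)) = 0"
  define h where "h = Abs_poly_mapping (\<lambda>a. if a \<in> monomials n d then c a else 0)"
  have "finite {a. (if a \<in> monomials n d then c a else 0) \<noteq> 0}"
    by (rule finite_subset[OF _ finite_monomials[of n d]]) (auto split: if_splits)
  then have lookup_h: "Poly_Mapping.lookup h = (\<lambda>a. if a \<in> monomials n d then c a else 0)"
    unfolding h_def by simp
  have keys_h: "Poly_Mapping.keys h \<subseteq> monomials n d"
    by (auto simp: in_keys_iff lookup_h split: if_splits)
  have "poly_act sc br u h b = (\<Sum>a\<in>monomials n d. sc (c a) (mon_act br u a b))"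
    by (simp add: poly_act_eq_sum_superset[OF finite_monomials keys_h] lookup_h)
  then have "h = 0"
    using tf u c keys_h unfolding torsion_free_def poly_in_vars_def monomials_def by auto
  then show "\<forall>a\<in>monomials n d. c a = 0"
    using lookup_h by (metis lookup_zero)
qed

text \<open>Extend \<open>x\<close> to a basis of \<open>B/Cent\<close>. Its monomial images of bounded degree span the same
  space as those of \<open>b\<close>, which by torsion-freeness has the maximal number \<open>|k|\<^sup>N\<close> of elements;
  so they are linearly independent.\<close>

lemma torsion_free_if_indep_mod:
  assumes b: "quot_basis sc Cent b n" and tf: "torsion_free n b" and x: "indep_mod m x"
  shows "torsion_free m x"
  unfolding torsion_free_def
proof (intro allI impI ballI; rule ccontr)
  fix g u
  assume g: "g \<noteq> 0 \<and> poly_in_vars m g" and u: "u \<in> Cent" and pa: "poly_act sc br u g x = 0"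
    and "u \<noteq> 0"
  obtain p z where "m \<le> p" "p \<le> n" and z_x: "\<forall>i<m. z i = x i" and z: "quot_basis sc Cent z p"
    using indep_mod_extend_to_quot_basis[OF b x] by blast
  define d where "d = Max (total_degree ` Poly_Mapping.keys g)"
  have keys_g: "Poly_Mapping.keys g \<subseteq> monomials p d"
    using g \<open>m \<le> p\<close> unfolding monomials_def poly_in_vars_def d_def by force
  let ?W = "V.span ((\<lambda>a. mon_act br u a z) ` monomials p d)"
  have "?W = V.span ((\<lambda>a. mon_act br u a b) ` monomials n d)"
    using b z u span_mon_act_subset[of u p z b n d] span_mon_act_subset[of u n b z p d]
    unfolding quot_basis_Cent_iff by auto
  then have "card ?W = card (UNIV :: 'k set) ^ card (monomials n d)"
    using card_span_mon_act[OF tf u \<open>u \<noteq> 0\<close>] by simp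
  moreover have "card (UNIV :: 'k set) ^ card (monomials p d)
      \<le> card (UNIV :: 'k set) ^ card (monomials n d)"
    using card_field_ge_2[where 'k='k] \<open>p \<le> n\<close>
    by (intro power_increasing card_mono finite_monomials monomials_mono) auto
  ultimately have card_W: "card ?W = card (UNIV :: 'k set) ^ card (monomials p d)"
    using F.card_span_image_le[OF finite_monomials, of "\<lambda>a. mon_act br u a z" p d] by simp
  have "poly_act sc br u g z = poly_act sc br u g x"
    unfolding poly_act_def using g z_x unfolding poly_in_vars_def
    by (intro sum.cong refl arg_cong[where f="sc _"] mon_act_cong) auto
  then have "(\<Sum>a\<in>monomials p d. sc (Poly_Mapping.lookup g a) (mon_act br u a z)) = 0"
    using pa poly_act_eq_sum_superset[OF finite_monomials keys_g] by simp
  then have "\<forall>a\<in>monomials p d. Poly_Mapping.lookup g a = 0"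
    by (rule F.independent_if_card_span_image[OF finite_monomials card_W])
  then show False
    using g keys_g by (metis in_keys_iff keys_eq_empty subset_iff ex_in_conv)
qed

end

section \<open>The axioms \<open>\<Phi>1\<close>--\<open>\<Phi>5\<close>\<close>

definition linear_poly :: "nat \<Rightarrow> (nat \<Rightarrow> 'k::field) \<Rightarrow> ((nat \<Rightarrow>\<^sub>0 nat) \<Rightarrow>\<^sub>0 'k)" where
  "linear_poly n c = (\<Sum>i<n. Poly_Mapping.single (Poly_Mapping.single i 1) (c i))"

lemma single_eq_single_iff [simp]:
  "k \<noteq> 0 \<Longrightarrow> Poly_Mapping.single i k = Poly_Mapping.single j k \<longleftrightarrow> i = j"
  by (metis lookup_single_eq lookup_single_not_eq)

lemma lookup_linear_poly:
  assumes "j < n"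
  shows "Poly_Mapping.lookup (linear_poly n c) (Poly_Mapping.single j 1) = c j"
proof -
  have "Poly_Mapping.lookup (linear_poly n c) (Poly_Mapping.single j 1) = (\<Sum>i<n. if i = j then c i else 0)"
    unfolding linear_poly_def lookup_sum
    by (rule sum.cong) (auto simp: lookup_single when_def)
  also have "\<dots> = c j" using assms by simp
  finally show ?thesis .
qed

lemma keys_linear_poly: "Poly_Mapping.keys (linear_poly n c) \<subseteq> (\<lambda>i. Poly_Mapping.single i 1) ` {..<n}"
  unfolding linear_poly_def by (rule order_trans[OF keys_sum]) auto

lemma linear_poly_nonzero: "j < n \<Longrightarrow> c j \<noteq> 0 \<Longrightarrow> linear_poly n c \<noteq> 0"
  using lookup_linear_poly by (metis lookup_zero)

lemma poly_in_vars_linear_poly: "poly_in_vars n (linear_poly n c)"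
  unfolding poly_in_vars_def using keys_linear_poly by fastforce

context metabelian_lie
begin

lemma poly_act_linear_poly: "poly_act sc br w (linear_poly n c) t = br w (\<Sum>i<n. sc (c i) (t i))"
proof -
  have "poly_act sc br w (linear_poly n c) t
      = (\<Sum>a\<in>(\<lambda>i. Poly_Mapping.single i 1) ` {..<n}.
           sc (Poly_Mapping.lookup (linear_poly n c) a) (mon_act br w a t))"
    by (rule poly_act_eq_sum_superset) (use keys_linear_poly in auto)
  also have "\<dots> = (\<Sum>i<n. sc (c i) (br w (t i)))"
  proof (rule sum.reindex_cong[where l="\<lambda>i. Poly_Mapping.single i 1"])
    fix i assume "i \<in> {..<n}"
    then show "sc (Poly_Mapping.lookup (linear_poly n c) (Poly_Mapping.single i 1))
        (mon_act br w (Poly_Mapping.single i 1) t) = sc (c i) (br w (t i))"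
      by (simp only: lookup_linear_poly mon_act_single lessThan_iff)
  qed (auto simp: inj_on_def)
  finally show ?thesis by (simp add: bracket_sum_right bracket_scale_right)
qed

lemma indep_mod_length_le_if_Phi4:
  assumes "Phi2 br" "Phi4 sc br r" "indep_mod p y"
  shows "p \<le> r"
proof (rule ccontr)
  assume "\<not> p \<le> r"
  then have "indep_mod (Suc r) y" using indep_mod_mono assms(3) by simp
  then show False using assms(1,2) phi_iff_indep_mod unfolding Phi4_def by blast
qed

end

context abelian_Cent_lie
begin

text \<open>If \<open>f\<close> kills \<open>u \<in> Cent\<close> it kills every \<open>u b\<^sub>i\<close> too, since the action commutes with right
  multiplication; once all \<open>u b\<^sub>i\<close> vanish, \<open>u \<noteq> 0\<close> is central and \<open>\<Phi>3\<close> makes \<open>B\<close> abelian.\<close>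

lemma torsion_free_if_Phi3:
  assumes P3: "Phi3 br" and b: "quot_basis sc Cent b n"
    and step: "\<And>u f i. u \<in> Cent \<Longrightarrow> f \<noteq> 0 \<Longrightarrow> poly_in_vars n f \<Longrightarrow> i < n
                 \<Longrightarrow> poly_act sc br (br u (b i)) f b = 0 \<Longrightarrow> br u (b i) = 0"
  shows "torsion_free n b"
  unfolding torsion_free_def
proof (intro allI impI ballI)
  fix f u assume f: "f \<noteq> 0 \<and> poly_in_vars n f" and u: "u \<in> Cent" and pa: "poly_act sc br u f b = 0"
  show "u = 0"
  proof (cases "n = 0")
    case True
    then have "Poly_Mapping.keys f \<subseteq> {0}"
      using f unfolding poly_in_vars_def by auto
    moreover have "Poly_Mapping.keys f \<noteq> {}"
      using f by simp
    ultimately have "Poly_Mapping.keys f = {0}"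
      by blast
    then show ?thesis using pa by (auto simp: poly_act_def in_keys_iff)
  next
    case False
    have "br u (b i) = 0" if "i < n" for i
      using step[OF u _ _ that, of f] f pa poly_act_bracket[OF u] by simp
    moreover have "br u v = 0" if "v \<in> Cent" for v
      using u that Cent_abelian unfolding abelian_set_def by blast
    ultimately have "br u v = 0" if "v \<in> Cent \<union> b ` {..<n}" for v
      using that by (elim UnE imageE) auto
    then have central: "br u y = 0" for y
    proof (rule bracket_zero_if_zero_on_spanning[where S = "Cent \<union> b ` {..<n}"])
      show "V.span (Cent \<union> b ` {..<n}) = UNIV"
        using b unfolding quot_basis_Cent_iff by blast
    qed
    show ?thesis
    proof (rule ccontr)
      assume "u \<noteq> 0"
      then have "b 0 \<in> Cent"
        using P3 central unfolding Phi3_def Cent_def by blast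
      then show False
        using not_in_Cent_if_indep_mod b False unfolding quot_basis_Cent_iff by blast
    qed
  qed
qed

end

context finite_abelian_Cent_lie
begin

lemma eq_zero_if_bracket_outside_Cent:
  assumes b: "quot_basis sc Cent b n" and tf: "torsion_free n b"
    and u: "u \<in> Cent" and y: "y \<notin> Cent" and uy: "br u y = 0"
  shows "u = 0"
proof -
  have "torsion_free 1 (\<lambda>_. y)"
    by (rule torsion_free_if_indep_mod[OF b tf indep_mod_single[OF y]])
  moreover have "linear_poly 1 (\<lambda>_. 1) \<noteq> (0 :: (nat \<Rightarrow>\<^sub>0 nat) \<Rightarrow>\<^sub>0 'k)"
    by (rule linear_poly_nonzero[of 0]) auto
  moreover have "poly_act sc br u (linear_poly 1 (\<lambda>_. 1)) (\<lambda>_. y) = 0"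
    using uy by (simp add: poly_act_linear_poly)
  ultimately show ?thesis
    using u poly_in_vars_linear_poly unfolding torsion_free_def by blast
qed

lemma Phi2_if_torsion_free:
  assumes b: "quot_basis sc Cent b n" and tf: "torsion_free n b"
  shows "Phi2 br"
  unfolding Phi2_def
proof (intro allI impI)
  fix x y assume xy: "br (br x y) x = 0 \<and> br (br x y) y = 0"
  show "br x y = 0"
  proof (cases "x \<in> Cent \<and> y \<in> Cent")
    case True
    then show ?thesis using Cent_abelian unfolding abelian_set_def by blast
  next
    case False
    then show ?thesis
      using eq_zero_if_bracket_outside_Cent[OF b tf bracket_in_Cent] xy by blast
  qed
qed

lemma Phi3_if_torsion_free:
  assumes b: "quot_basis sc Cent b n" and tf: "torsion_free n b"
  shows "Phi3 br"
  unfolding Phi3_def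
proof (intro allI impI)
  fix x y z assume xyz: "x \<noteq> 0 \<and> br x y = 0 \<and> br x z = 0"
  note zero_if = eq_zero_if_bracket_outside_Cent[OF b tf]
  have yx: "br y x = 0" and zx: "br z x = 0"
    using xyz bracket_anticomm[of y x] bracket_anticomm[of z x] by auto
  show "br y z = 0"
  proof (cases "x \<in> Cent")
    case True
    then have "y \<in> Cent" "z \<in> Cent"
      using zero_if[OF True] xyz by blast+
    then show ?thesis using Cent_abelian unfolding abelian_set_def by blast
  next
    case x: False
    consider "y \<in> Cent" | "z \<in> Cent" | "y \<notin> Cent" "z \<notin> Cent" by blast
    then show ?thesis
    proof cases
      case 1
      then show ?thesis using zero_if[OF 1 x yx] by simp
    next
      case 2
      then show ?thesis using zero_if[OF 2 x zx] by simp
    next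
      case 3
      have "br x (br y z) = 0"
        using jacobi[of x y z] xyz zx by simp
      then have "br (br y z) x = 0"
        using bracket_anticomm[of "br y z" x] by simp
      then show ?thesis using zero_if[OF bracket_in_Cent x] by blast
    qed
  qed
qed

lemma Phi4_if_quot_basis:
  assumes "quot_basis sc Cent b n" "n \<le> r"
  shows "Phi4 sc br r"
  unfolding Phi4_def
proof
  fix x
  have "\<not> indep_mod (Suc r) x"
    using indep_mod_length_le[of "Suc r" x b n] assms unfolding quot_basis_Cent_iff by auto
  then show "\<not> phi sc br (Suc r) x"
    unfolding phi_def indep_mod_def using fitf_if_in_Cent by blast
qed

lemma Phi5_if_torsion_free:
  assumes b: "quot_basis sc Cent b n" and tf: "torsion_free n b"
  shows "Phi5 sc br r"
  unfolding Phi5_def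
proof (intro allI impI notI)
  fix m f z1 z2 x
  assume f: "f \<noteq> 0 \<and> poly_in_vars m f" and z: "poly_act sc br (br z1 z2) f x = 0 \<and> br z1 z2 \<noteq> 0"
    and "phi sc br m x"
  then have "torsion_free m x"
    using torsion_free_if_indep_mod[OF b tf] phi_iff_indep_mod Phi2_if_torsion_free[OF b tf] by blast
  then show False
    using f z bracket_in_Cent unfolding torsion_free_def by blast
qed

end

section \<open>Free metabelian Lie algebras\<close>

text \<open>The two-dimensional non-abelian Lie algebra, \<open>e\<^sub>1 e\<^sub>0 = e\<^sub>1\<close>, carried by the first two
  coordinates of \<open>k\<^sup>(\<^sup>\<nat>\<^sup>)\<close>; being metabelian, it is a target for homomorphisms out of \<open>F\<^sub>r\<close>.\<close>

definition affine_bracket :: "(nat \<Rightarrow>\<^sub>0 'k::field) \<Rightarrow> (nat \<Rightarrow>\<^sub>0 'k) \<Rightarrow> (nat \<Rightarrow>\<^sub>0 'k)" where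
  "affine_bracket v w = Poly_Mapping.single 1
     (Poly_Mapping.lookup v 1 * Poly_Mapping.lookup w 0 - Poly_Mapping.lookup v 0 * Poly_Mapping.lookup w 1)"

lemma lookup_std_scale: "Poly_Mapping.lookup (std_scale c v) k = c * Poly_Mapping.lookup v k"
  unfolding std_scale_def by (simp add: map.rep_eq when_def)

lemma lookup_affine_bracket:
  "Poly_Mapping.lookup (affine_bracket v w) k =
     (if k = 1 then Poly_Mapping.lookup v 1 * Poly_Mapping.lookup w 0
        - Poly_Mapping.lookup v 0 * Poly_Mapping.lookup w 1 else 0)"
  unfolding affine_bracket_def by (simp add: lookup_single when_def)

lemma vector_space_std_scale: "vector_space (std_scale :: 'k::field \<Rightarrow> _)"
  unfolding vector_space_def
  by (intro conjI allI poly_mapping_eqI) (simp_all add: lookup_std_scale lookup_add algebra_simps)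

lemma lie_algebra_affine_bracket: "lie_algebra std_scale (affine_bracket :: (nat \<Rightarrow>\<^sub>0 'k::field) \<Rightarrow> _)"
  unfolding lie_algebra_def
  by (intro conjI allI vector_space_std_scale poly_mapping_eqI)
    (simp_all add: lookup_affine_bracket lookup_std_scale lookup_add algebra_simps)

lemma metabelian_affine_bracket: "metabelian (affine_bracket :: (nat \<Rightarrow>\<^sub>0 'k::field) \<Rightarrow> _)"
  unfolding metabelian_def by (intro allI poly_mapping_eqI) (simp add: lookup_affine_bracket)

context metabelian_lie
begin

lemma subspace_gen_subalg: "V.subspace (gen_subalg sc br A)"
  unfolding gen_subalg_def V.subspace_def by auto

lemma gen_subalg_base: "x \<in> A \<Longrightarrow> x \<in> gen_subalg sc br A"
  unfolding gen_subalg_def by blast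

lemma gen_subalg_bracket:
  "x \<in> gen_subalg sc br A \<Longrightarrow> y \<in> gen_subalg sc br A \<Longrightarrow> br x y \<in> gen_subalg sc br A"
  unfolding gen_subalg_def by blast

lemma lie_hom_on_zero:
  assumes "lie_hom_on sc br sc' br' (gen_subalg sc br A) h"
  shows "h 0 = 0"
proof -
  have "h (0 + 0) = h 0 + h 0"
    using assms V.subspace_0[OF subspace_gen_subalg] unfolding lie_hom_on_def by blast
  then show ?thesis by simp
qed

lemma lie_hom_on_lincomb:
  fixes n :: nat
  assumes h: "lie_hom_on sc br sc' br' (gen_subalg sc br A) h" and x: "\<forall>i<n. x i \<in> A"
  shows "h (\<Sum>i<n. sc (c i) (x i)) = (\<Sum>i<n. sc' (c i) (h (x i)))
       \<and> (\<Sum>i<n. sc (c i) (x i)) \<in> gen_subalg sc br A"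
  using x
proof (induction n)
  case 0
  then show ?case using lie_hom_on_zero[OF h] V.subspace_0[OF subspace_gen_subalg] by simp
next
  case (Suc n)
  have "sc (c n) (x n) \<in> gen_subalg sc br A"
    using Suc.prems by (intro V.subspace_scale[OF subspace_gen_subalg] gen_subalg_base) simp
  with Suc h show ?case
    unfolding lie_hom_on_def using gen_subalg_base V.subspace_add[OF subspace_gen_subalg]
    by (simp add: V.subspace_scale[OF subspace_gen_subalg])
qed

lemma exists_hom_affine:
  assumes "free_metabelian_on sc br r a"
  shows "\<exists>h. lie_hom_on sc br std_scale affine_bracket (gen_subalg sc br (a ` {..<r})) h
           \<and> (\<forall>i<r. h (a i) = c i)"
  using assms lie_algebra_affine_bracket metabelian_affine_bracket
  unfolding free_metabelian_on_def Let_def by blast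

text \<open>Send one generator with nonzero coefficient to \<open>e\<^sub>0\<close> (suitably scaled) and another one
  to \<open>e\<^sub>1\<close>: the image of \<open>x = \<Sum> c\<^sub>i a\<^sub>i\<close> then has \<open>e\<^sub>0\<close>-coordinate \<open>1\<close>, so \<open>(x a\<^sub>i) x \<noteq> 0\<close>,
  whereas every element of \<open>Cent\<close> satisfies \<open>x y x = 0\<close>.\<close>

lemma indep_mod_free_generators:
  assumes free: "free_metabelian_on sc br r a" and r: "2 \<le> r"
  shows "indep_mod r a"
  unfolding indep_mod_def
proof (rule allI, rule impI, rule ccontr)
  fix c assume x_Cent: "(\<Sum>i<r. sc (c i) (a i)) \<in> Cent" and "\<not> (\<forall>i<r. c i = 0)"
  then obtain j where j: "j < r" "c j \<noteq> 0" by blast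
  define i where "i = (if j = 0 then 1 else (0::nat))"
  have i: "i < r" "i \<noteq> j" unfolding i_def using r by auto
  define v where "v l = (if l = j then Poly_Mapping.single (0::nat) (inverse (c j))
      else if l = i then Poly_Mapping.single 1 1 else 0)" for l :: nat
  let ?G = "gen_subalg sc br (a ` {..<r})" and ?x = "\<Sum>l<r. sc (c l) (a l)"
  obtain h where h: "lie_hom_on sc br std_scale affine_bracket ?G h" "\<forall>l<r. h (a l) = v l"
    using exists_hom_affine[OF free] by blast
  have hx: "h ?x = (\<Sum>l<r. std_scale (c l) (v l))" "?x \<in> ?G"
    using lie_hom_on_lincomb[OF h(1), of r a c] h(2) by auto
  have "Poly_Mapping.lookup (h ?x) 0 = (\<Sum>l<r. if l = j then 1 else 0)"
    unfolding hx(1) lookup_sum lookup_std_scale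
    by (rule sum.cong) (use j i in \<open>auto simp: v_def lookup_single\<close>)
  then have hx0: "Poly_Mapping.lookup (h ?x) 0 = 1"
    using j by simp
  have ai: "a i \<in> ?G" using i by (intro gen_subalg_base) simp
  have "h (br (br ?x (a i)) ?x) = affine_bracket (affine_bracket (h ?x) (Poly_Mapping.single 1 1)) (h ?x)"
    using h hx(2) ai gen_subalg_bracket i unfolding lie_hom_on_def v_def by simp
  moreover have "br (br ?x (a i)) ?x = 0"
    using fitf_if_in_Cent[OF x_Cent] unfolding fitf_def by blast
  ultimately have "affine_bracket (affine_bracket (h ?x) (Poly_Mapping.single 1 1)) (h ?x) = 0"
    using lie_hom_on_zero[OF h(1)] by simp
  then have "Poly_Mapping.lookup
      (affine_bracket (affine_bracket (h ?x) (Poly_Mapping.single 1 1)) (h ?x)) 1 = 0"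
    by simp
  then show False using hx0 by (simp add: lookup_affine_bracket lookup_single)
qed

end

lemma Phi1_iff_metabelian: "Phi1 br \<longleftrightarrow> metabelian br"
  unfolding Phi1_def metabelian_def ..

context metabelian_lie
begin

lemma U_algebra_if_quot_basis:
  assumes "abelian_set br Cent" "Fit sc br = Cent" "quot_basis sc Cent b n" "torsion_free n b"
  shows "U_algebra sc br \<and> quot_dim sc (Fit sc br) n"
  using assms lie metabelian unfolding U_algebra_def quot_dim_def torsion_free_def by auto

lemma quot_basis_if_U_algebra:
  assumes "U_algebra sc br"
  shows "Fit sc br = Cent \<and> abelian_set br Cent \<and> (\<exists>n b. quot_basis sc Cent b n \<and> torsion_free n b)"
proof -
  have "Fit sc br = Cent"
    using assms Fit_eq_Cent_if_abelian unfolding U_algebra_def by blast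
  with assms show ?thesis
    unfolding U_algebra_def torsion_free_def by auto
qed

end

context finite_abelian_Cent_lie
begin

lemma axioms_if_torsion_free:
  assumes b: "quot_basis sc Cent b n" and tf: "torsion_free n b"
    and b': "quot_basis sc Cent b' n'" and "n' \<le> r"
  shows "Phi1 br \<and> Phi2 br \<and> Phi3 br \<and> Phi4 sc br r \<and> Phi5 sc br r"
  using metabelian Phi2_if_torsion_free[OF b tf] Phi3_if_torsion_free[OF b tf]
    Phi4_if_quot_basis[OF b' \<open>n' \<le> r\<close>] Phi5_if_torsion_free[OF b tf]
  unfolding Phi1_iff_metabelian by blast

lemma Phi5'_if_torsion_free:
  assumes "quot_basis sc Cent b n" "torsion_free n b" "indep_mod r a"
  shows "Phi5' sc br r a"
  using torsion_free_if_indep_mod[OF assms] bracket_in_Cent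
  unfolding Phi5'_def torsion_free_def by blast

end

lemma abelian_Cent_lie_if_axioms:
  assumes "lie_algebra sc br" "Phi1 br" "Phi2 br"
  shows "abelian_Cent_lie sc br"
proof -
  interpret metabelian_lie sc br
    using assms(1,2) unfolding Phi1_iff_metabelian by unfold_locales
  show ?thesis
    by unfold_locales (rule Cent_abelian_if_Phi2[OF assms(3)])
qed

lemma abelian_Cent_lie_if_U_algebra:
  assumes "lie_algebra sc br" "U_algebra sc br"
  shows "abelian_Cent_lie sc br"
proof -
  interpret metabelian_lie sc br
    using assms unfolding U_algebra_def by unfold_locales auto
  show ?thesis
    by unfold_locales (use quot_basis_if_U_algebra[OF assms(2)] in blast)
qed

lemma U_algebra_if_axioms:
  fixes sc :: "'k::{field,finite} \<Rightarrow> 'b::ab_group_add \<Rightarrow> 'b"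
  assumes lie: "lie_algebra sc br"
    and P: "Phi1 br" "Phi2 br" "Phi3 br" "Phi4 sc br r" "Phi5 sc br r"
  shows "U_algebra sc br \<and> (\<exists>n\<le>r. quot_dim sc (Fit sc br) n)"
proof -
  interpret finite_abelian_Cent_lie sc br
    using abelian_Cent_lie_if_axioms[OF lie P(1,2)] by (simp add: finite_abelian_Cent_lie_def)
  obtain n b where "n \<le> r" and b: "quot_basis sc Cent b n"
    using exists_quot_basis_if_indep_mod_bounded indep_mod_length_le_if_Phi4[OF P(2,4)] by blast
  have "phi sc br n b"
    using b phi_iff_indep_mod[OF P(2)] unfolding quot_basis_Cent_iff by blast
  then have "torsion_free n b"
    using torsion_free_if_Phi3[OF P(3) b] P(5) \<open>n \<le> r\<close> unfolding Phi5_def by blast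
  then show ?thesis
    using U_algebra_if_quot_basis Fit_eq_Cent_if_Phi2 Cent_abelian_if_Phi2 P(2) b \<open>n \<le> r\<close> by blast
qed

lemma axioms_if_U_algebra:
  fixes sc :: "'k::{field,finite} \<Rightarrow> 'b::ab_group_add \<Rightarrow> 'b"
  assumes lie: "lie_algebra sc br" and U: "U_algebra sc br"
    and dim: "quot_dim sc (Fit sc br) n" "n \<le> r"
  shows "Phi1 br \<and> Phi2 br \<and> Phi3 br \<and> Phi4 sc br r \<and> Phi5 sc br r"
proof -
  interpret finite_abelian_Cent_lie sc br
    using abelian_Cent_lie_if_U_algebra[OF lie U] by (simp add: finite_abelian_Cent_lie_def)
  obtain m b where "quot_basis sc Cent b m" "torsion_free m b" and Fit: "Fit sc br = Cent"
    using quot_basis_if_U_algebra[OF U] by blast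
  moreover obtain b' where "quot_basis sc Cent b' n"
    using dim(1) unfolding Fit quot_dim_def by blast
  ultimately show ?thesis
    using axioms_if_torsion_free dim(2) by blast
qed

lemma Fr_U_algebra_if_axioms:
  fixes sc :: "'k::{field,finite} \<Rightarrow> 'b::ab_group_add \<Rightarrow> 'b"
  assumes Fr: "Fr_lie_algebra sc br r a" and r: "2 \<le> r"
    and P: "Phi1 br" "Phi2 br" "Phi3 br" "Phi4 sc br r" "Phi5' sc br r a"
  shows "U_algebra sc br \<and> quot_dim sc (Fit sc br) r"
proof -
  have lie: "lie_algebra sc br" and free: "free_metabelian_on sc br r a"
    using Fr unfolding Fr_lie_algebra_def by auto
  interpret finite_abelian_Cent_lie sc br
    using abelian_Cent_lie_if_axioms[OF lie P(1,2)] by (simp add: finite_abelian_Cent_lie_def)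
  have indep: "indep_mod r a"
    by (rule indep_mod_free_generators[OF free r])
  have "v \<in> V.span (Cent \<union> a ` {..<r})" for v
    using in_span_if_not_indep_mod_extension[OF indep] indep_mod_length_le_if_Phi4[OF P(2,4)]
    by fastforce
  then have a: "quot_basis sc Cent a r"
    using indep unfolding quot_basis_Cent_iff by blast
  have "torsion_free r a"
    using torsion_free_if_Phi3[OF P(3) a] P(5) unfolding Phi5'_def by blast
  then show ?thesis
    using U_algebra_if_quot_basis Fit_eq_Cent_if_Phi2 Cent_abelian_if_Phi2 P(2) a by blast
qed

lemma Fr_axioms_if_U_algebra:
  fixes sc :: "'k::{field,finite} \<Rightarrow> 'b::ab_group_add \<Rightarrow> 'b"
  assumes Fr: "Fr_lie_algebra sc br r a" and r: "2 \<le> r"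
    and U: "U_algebra sc br" and dim: "quot_dim sc (Fit sc br) r"
  shows "Phi1 br \<and> Phi2 br \<and> Phi3 br \<and> Phi4 sc br r \<and> Phi5' sc br r a"
proof -
  have lie: "lie_algebra sc br" and free: "free_metabelian_on sc br r a"
    using Fr unfolding Fr_lie_algebra_def by auto
  interpret finite_abelian_Cent_lie sc br
    using abelian_Cent_lie_if_U_algebra[OF lie U] by (simp add: finite_abelian_Cent_lie_def)
  obtain m b where "quot_basis sc Cent b m" "torsion_free m b"
    using quot_basis_if_U_algebra[OF U] by blast
  then show ?thesis
    using axioms_if_U_algebra[OF lie U dim order_refl]
      Phi5'_if_torsion_free indep_mod_free_generators[OF free r] by blast
qed

theorem lemma3p6:
  fixes sc :: "'k::{field,finite} \<Rightarrow> 'b::ab_group_add \<Rightarrow> 'b"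
    and br :: "'b \<Rightarrow> 'b \<Rightarrow> 'b"
    and r :: nat
    and a :: "nat \<Rightarrow> 'b"
  assumes "r \<ge> 2"
  shows "(lie_algebra sc br \<longrightarrow>
            ((Phi1 br \<and> Phi2 br \<and> Phi3 br \<and> Phi4 sc br r \<and> Phi5 sc br r)
             \<longleftrightarrow> (U_algebra sc br \<and> (\<exists>n\<le>r. quot_dim sc (Fit sc br) n))))
       \<and> (Fr_lie_algebra sc br r a \<longrightarrow>
            ((Phi1 br \<and> Phi2 br \<and> Phi3 br \<and> Phi4 sc br r \<and> Phi5' sc br r a)
             \<longleftrightarrow> (U_algebra sc br \<and> quot_dim sc (Fit sc br) r)))"
proof (intro conjI impI)
  assume lie: "lie_algebra sc br"
  show "(Phi1 br \<and> Phi2 br \<and> Phi3 br \<and> Phi4 sc br r \<and> Phi5 sc br r)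
      \<longleftrightarrow> (U_algebra sc br \<and> (\<exists>n\<le>r. quot_dim sc (Fit sc br) n))"
    using U_algebra_if_axioms[OF lie] axioms_if_U_algebra[OF lie] by blast
next
  assume Fr: "Fr_lie_algebra sc br r a"
  show "(Phi1 br \<and> Phi2 br \<and> Phi3 br \<and> Phi4 sc br r \<and> Phi5' sc br r a)
      \<longleftrightarrow> (U_algebra sc br \<and> quot_dim sc (Fit sc br) r)"
    using Fr_U_algebra_if_axioms[OF Fr assms] Fr_axioms_if_U_algebra[OF Fr assms] by blast
qed

end
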